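(* Let $X$ be a topological space with a compatible metric $d$ and $T\colon X\to X$ continuous. Then $h(T)\le h^B_d(T)\le h^d(T)$.
   Context: For covers $\mathcal A,\mathcal B$ of $X$, $\mathcal A\vee\mathcal B=\{A\cap B:A\in\mathcal A,B\in\mathcal B,A\cap B\ne\emptyset\}$, $\mathcal A^n=\mathcal A\vee T^{-1}(\mathcal A)\vee\dots\vee T^{-(n-1)}(\mathcal A)$; $N(\mathcal A)$ is the least cardinality of a subcover and $N_K(\mathcal A)$ the least cardinality of a subfamily whose union contains $K$. An open cover is admissible if at least one of its elements has compact complement; $h(T)=\sup\{\lim_n\frac1n\log N(\mathcal A^n):\mathcal A\text{ admissible open cover}\}$. $d_n(x,y)=\max_{0\le j<n}d(T^jx,T^jy)$, $\mathcal B_{d_n}(\varepsilon)$ is the family of open $d_n$-balls of radius $\varepsilon$ centered at points of $X$; $h^d(T)=\sup_{\varepsilon>0}\lim_n\frac1n\log N(\mathcal B_{d_n}(\varepsilon))$ and $h^B_d(T)=\sup_{\varepsilon>0,K\text{ compact}}\limsup_n\frac1n\log N_K(\mathcal B_{d_n}(\varepsilon))$. *)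

theory Defs
  imports "HOL-Analysis.Analysis"
begin

definition cover_join :: "'a set set \<Rightarrow> 'a set set \<Rightarrow> 'a set set" where
  "cover_join A B = {a \<inter> b | a b. a \<in> A \<and> b \<in> B \<and> a \<inter> b \<noteq> {}}"

definition cover_preimage :: "('a \<Rightarrow> 'a) \<Rightarrow> 'a set set \<Rightarrow> 'a set set" where
  "cover_preimage f A = (\<lambda>U. f -` U) ` A"

text \<open>A^n = A v T^-1 A v ... v T^-(n-1) A  (for n >= 1; the value at n = 0 is irrelevant).\<close>
fun cover_pow :: "('a \<Rightarrow> 'a) \<Rightarrow> 'a set set \<Rightarrow> nat \<Rightarrow> 'a set set" where
  "cover_pow T A 0 = {UNIV}"
| "cover_pow T A (Suc 0) = A"
| "cover_pow T A (Suc (Suc n)) =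
     cover_join (cover_pow T A (Suc n)) (cover_preimage (T ^^ Suc n) A)"

definition ecard :: "'b set \<Rightarrow> ereal" where
  "ecard B = (if finite B then ereal (real (card B)) else \<infinity>)"

definition N_K :: "'a set \<Rightarrow> 'a set set \<Rightarrow> ereal" where
  "N_K K A = (INF B \<in> {B. B \<subseteq> A \<and> K \<subseteq> \<Union>B}. ecard B)"

definition N_cov :: "'a set set \<Rightarrow> ereal" where
  "N_cov A = N_K UNIV A"

definition elog :: "ereal \<Rightarrow> ereal" where
  "elog x = (if x = \<infinity> then \<infinity> else if x \<le> 0 then - \<infinity> else ereal (ln (real_of_ereal x)))"

definition admissible_cover :: "'a::topological_space set set \<Rightarrow> bool" where
  "admissible_cover A \<longleftrightarrow> (\<forall>U\<in>A. open U) \<and> \<Union>A = UNIV \<and> (\<exists>U\<in>A. compact (- U))"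

definition top_entropy :: "('a::topological_space \<Rightarrow> 'a) \<Rightarrow> ereal" where
  "top_entropy T = (SUP A \<in> {A. admissible_cover A}.
      lim (\<lambda>n. elog (N_cov (cover_pow T A n)) / ereal (real n)))"

definition bowen_dist :: "('a \<Rightarrow> 'a \<Rightarrow> real) \<Rightarrow> ('a \<Rightarrow> 'a) \<Rightarrow> nat \<Rightarrow> 'a \<Rightarrow> 'a \<Rightarrow> real" where
  "bowen_dist d T n x y = (MAX j \<in> {..<n}. d ((T ^^ j) x) ((T ^^ j) y))"

definition bowen_balls :: "('a \<Rightarrow> 'a \<Rightarrow> real) \<Rightarrow> ('a \<Rightarrow> 'a) \<Rightarrow> nat \<Rightarrow> real \<Rightarrow> 'a set set" where
  "bowen_balls d T n e = {{y. bowen_dist d T n x y < e} | x. True}"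

definition metric_entropy :: "('a \<Rightarrow> 'a \<Rightarrow> real) \<Rightarrow> ('a \<Rightarrow> 'a) \<Rightarrow> ereal" where
  "metric_entropy d T = (SUP e \<in> {0<..}.
      limsup (\<lambda>n. elog (N_cov (bowen_balls d T n e)) / ereal (real n)))"

definition bowen_entropy :: "('a::topological_space \<Rightarrow> 'a \<Rightarrow> real) \<Rightarrow> ('a \<Rightarrow> 'a) \<Rightarrow> ereal" where
  "bowen_entropy d T = (SUP (e, K) \<in> {0<..} \<times> {K. compact K}.
      limsup (\<lambda>n. elog (N_K K (bowen_balls d T n e)) / ereal (real n)))"

end

theory Submission
  imports Defs
begin

(*
  Let A be an admissible cover, U a member of A with compact complement K, and delta a
  Lebesgue number of A. Split an orbit segment x, T x, ..., T^(n-1) x at the first time j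
  it enters K: before j it stays in U, and from j on it delta-shadows in d_(n-j) the centre
  of one of at most N_K(B_(d_n)(delta)) Bowen balls covering K, so it lies in a member of
  A^n determined by j and that centre. Hence N(A^n) <= 1 + n N_K(B_(d_n)(delta)), which
  compares the growth rates; the limit defining h(T) exists by Fekete's lemma because
  N(A^n) is submultiplicative. The second inequality is immediate from N_K <= N.
*)

subsection \<open>Cylinders and joins of covers\<close>

definition cylinder :: "('a \<Rightarrow> 'a) \<Rightarrow> nat \<Rightarrow> (nat \<Rightarrow> 'a set) \<Rightarrow> 'a set" where
  "cylinder T n f = (\<Inter>i<n. (T ^^ i) -` f i)"

lemma cylinder_0 [simp]: "cylinder T 0 f = UNIV"
  by (simp add: cylinder_def)

lemma cylinder_Suc: "cylinder T (Suc n) f = cylinder T n f \<inter> (T ^^ n) -` f n"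
  by (auto simp: cylinder_def lessThan_Suc)

lemma cylinder_cong: "(\<And>i. i < n \<Longrightarrow> f i = g i) \<Longrightarrow> cylinder T n f = cylinder T n g"
  by (simp add: cylinder_def)

lemma mem_cylinder_iff: "x \<in> cylinder T n f \<longleftrightarrow> (\<forall>i<n. (T ^^ i) x \<in> f i)"
  by (auto simp: cylinder_def)

lemma cylinder_add:
  "cylinder T (m + n) (\<lambda>i. if i < m then f i else g (i - m)) =
     cylinder T m f \<inter> (T ^^ m) -` cylinder T n g"
proof (rule set_eqI)
  fix x
  have split: "(\<forall>i<m + n. P i) \<longleftrightarrow> (\<forall>i<m. P i) \<and> (\<forall>i<n. P (m + i))" for P
    by (metis add_less_cancel_left le_add_diff_inverse not_le trans_less_add1)
  have "(T ^^ (m + i)) x = (T ^^ i) ((T ^^ m) x)" for i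
    by (simp add: funpow_add add.commute)
  then show "x \<in> cylinder T (m + n) (\<lambda>i. if i < m then f i else g (i - m)) \<longleftrightarrow>
      x \<in> cylinder T m f \<inter> (T ^^ m) -` cylinder T n g"
    unfolding mem_cylinder_iff Int_iff vimage_eq split by simp
qed

lemma cover_pow_Suc:
  "0 < n \<Longrightarrow> cover_pow T A (Suc n) = cover_join (cover_pow T A n) (cover_preimage (T ^^ n) A)"
  by (cases n) simp_all

lemma cover_pow_memD:
  assumes "0 < n" "S \<in> cover_pow T A n"
  shows "\<exists>f. (\<forall>i<n. f i \<in> A) \<and> S = cylinder T n f"
  using assms
proof (induction n arbitrary: S rule: nat_induct_non_zero)
  case 1
  then show ?case
    by (intro exI[of _ "\<lambda>_. S"]) (simp add: cylinder_Suc)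
next
  case (Suc n)
  then obtain a c where S: "S = a \<inter> (T ^^ n) -` c" and a: "a \<in> cover_pow T A n" and c: "c \<in> A"
    by (auto simp: cover_pow_Suc cover_join_def cover_preimage_def)
  obtain f where f: "\<forall>i<n. f i \<in> A" "a = cylinder T n f"
    using Suc.IH[OF a] by blast
  have "S = cylinder T (Suc n) (f(n := c))"
    using S f(2) by (simp add: cylinder_Suc cong: cylinder_cong)
  moreover have "\<forall>i<Suc n. (f(n := c)) i \<in> A"
    using f(1) c by (simp add: less_Suc_eq)
  ultimately show ?case by blast
qed

lemma cover_pow_memI:
  assumes "0 < n" "\<forall>i<n. f i \<in> A" "cylinder T n f \<noteq> {}"
  shows "cylinder T n f \<in> cover_pow T A n"
  using assms
proof (induction n rule: nat_induct_non_zero)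
  case 1
  then show ?case by (simp add: cylinder_Suc)
next
  case (Suc n)
  then have "cylinder T n f \<in> cover_pow T A n"
    by (intro Suc.IH) (auto simp: cylinder_Suc)
  moreover have "(T ^^ n) -` f n \<in> cover_preimage (T ^^ n) A"
    using Suc.prems(1) by (simp add: cover_preimage_def)
  ultimately show ?case
    using Suc.hyps Suc.prems(2) by (auto simp: cover_pow_Suc cover_join_def cylinder_Suc)
qed

lemma cover_pow_add_memI:
  assumes "0 < m" "0 < n" "b \<in> cover_pow T A m" "c \<in> cover_pow T A n" "b \<inter> (T ^^ m) -` c \<noteq> {}"
  shows "b \<inter> (T ^^ m) -` c \<in> cover_pow T A (m + n)"
proof -
  obtain f g where f: "\<forall>i<m. f i \<in> A" "b = cylinder T m f"
    and g: "\<forall>i<n. g i \<in> A" "c = cylinder T n g"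
    using cover_pow_memD assms by metis
  then show ?thesis
    using cover_pow_memI[of "m + n" "\<lambda>i. if i < m then f i else g (i - m)" A T] assms
    by (simp add: cylinder_add)
qed

lemma cover_pow_add_subcover:
  assumes "0 < m" "0 < n"
    and B: "B \<subseteq> cover_pow T A m" "UNIV \<subseteq> \<Union>B" "finite B"
    and C: "C \<subseteq> cover_pow T A n" "UNIV \<subseteq> \<Union>C" "finite C"
  obtains G where "G \<subseteq> cover_pow T A (m + n)" "UNIV \<subseteq> \<Union>G" "finite G"
    "card G \<le> card B * card C"
proof
  define G where "G = (\<lambda>(b, c). b \<inter> (T ^^ m) -` c) ` (B \<times> C) - {{}}"
  show "G \<subseteq> cover_pow T A (m + n)"
  proof
    fix g assume "g \<in> G"
    then obtain b c where "b \<in> B" "c \<in> C" "g = b \<inter> (T ^^ m) -` c" "g \<noteq> {}"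
      by (auto simp: G_def)
    with B(1) C(1) show "g \<in> cover_pow T A (m + n)"
      using cover_pow_add_memI[OF assms(1,2)] by blast
  qed
  show "UNIV \<subseteq> \<Union>G"
  proof
    fix x
    obtain b c where "b \<in> B" "x \<in> b" "c \<in> C" "(T ^^ m) x \<in> c"
      using B(2) C(2) by blast
    then show "x \<in> \<Union>G"
      unfolding G_def by blast
  qed
  show "finite G"
    using B(3) C(3) by (simp add: G_def)
  have "card G \<le> card ((\<lambda>(b, c). b \<inter> (T ^^ m) -` c) ` (B \<times> C))"
    unfolding G_def using B(3) C(3) by (intro card_mono) auto
  also have "\<dots> \<le> card (B \<times> C)"
    using B(3) C(3) by (intro card_image_le) simp
  finally show "card G \<le> card B * card C"
    by (simp add: card_cartesian_product)
qed

subsection \<open>Minimal subcovers and submultiplicativity\<close>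

lemma N_K_le_ecard: "B \<subseteq> A \<Longrightarrow> K \<subseteq> \<Union>B \<Longrightarrow> N_K K A \<le> ecard B"
  unfolding N_K_def by (rule INF_lower) auto

lemma N_cov_le_card: "B \<subseteq> A \<Longrightarrow> UNIV \<subseteq> \<Union>B \<Longrightarrow> finite B \<Longrightarrow> N_cov A \<le> card B"
  using N_K_le_ecard[of B A UNIV] by (simp add: N_cov_def ecard_def)

lemma N_K_attained:
  assumes "N_K K A \<noteq> \<infinity>"
  obtains B where "B \<subseteq> A" "K \<subseteq> \<Union>B" "finite B" "N_K K A = card B"
proof -
  define P where "P B \<longleftrightarrow> B \<subseteq> A \<and> K \<subseteq> \<Union>B \<and> finite B" for B
  have "\<exists>B. P B"
  proof (rule ccontr)
    assume "\<nexists>B. P B"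
    then have "\<infinity> \<le> N_K K A"
      unfolding N_K_def by (intro INF_greatest) (auto simp: P_def ecard_def)
    with assms show False
      by simp
  qed
  then obtain B where B: "P B" "\<forall>B'. P B' \<longrightarrow> card B \<le> card B'"
    using ex_has_least_nat[where P = P and m = card] by blast
  have "N_K K A = card B"
  proof (rule antisym)
    show "N_K K A \<le> card B"
      using B(1) N_K_le_ecard[of B A K] by (simp add: P_def ecard_def)
    show "ereal (card B) \<le> N_K K A"
      unfolding N_K_def using B by (intro INF_greatest) (auto simp: P_def ecard_def)
  qed
  then show ?thesis
    using B(1) that unfolding P_def by blast
qed

lemma N_K_le_of_refines:
  assumes "\<forall>b'\<in>A'. \<exists>b\<in>A. b' \<subseteq> b"
  shows "N_K K A \<le> N_K K A'"
  unfolding N_K_def[of K A']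
proof (rule INF_greatest)
  fix B assume B: "B \<in> {B. B \<subseteq> A' \<and> K \<subseteq> \<Union>B}"
  have "\<forall>b'\<in>B. \<exists>b. b \<in> A \<and> b' \<subseteq> b"
    using assms B by blast
  then obtain g where g: "\<forall>b'\<in>B. g b' \<in> A \<and> b' \<subseteq> g b'"
    by (rule bchoice[THEN exE])
  have "N_K K A \<le> ecard (g ` B)"
    using B g by (intro N_K_le_ecard) blast+
  also have "\<dots> \<le> ecard B"
    by (simp add: ecard_def card_image_le)
  finally show "N_K K A \<le> ecard B" .
qed

lemma N_K_mono: "K \<subseteq> K' \<Longrightarrow> N_K K A \<le> N_K K' A"
  unfolding N_K_def by (rule INF_superset_mono) auto

lemma one_le_N_K: "K \<noteq> {} \<Longrightarrow> 1 \<le> N_K K A"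
  unfolding N_K_def by (intro INF_greatest) (auto simp: ecard_def Suc_le_eq card_gt_0_iff)

lemma N_K_nonneg: "0 \<le> N_K K A"
  unfolding N_K_def by (intro INF_greatest) (simp add: ecard_def)

lemma N_cov_singleton_UNIV: "N_cov {UNIV} = 1"
  using N_cov_le_card[of "{UNIV}" "{UNIV}"] one_le_N_K[of UNIV "{UNIV}"]
  by (auto simp: N_cov_def intro: antisym simp flip: one_ereal_def)

lemma N_cov_cover_pow_finite:
  assumes "B \<subseteq> A" "UNIV \<subseteq> \<Union>B" "finite B"
  shows "N_cov (cover_pow T A n) \<noteq> \<infinity>"
proof (cases "n = 0")
  case False
  have "\<exists>G. G \<subseteq> cover_pow T A n \<and> UNIV \<subseteq> \<Union>G \<and> finite G" if "0 < n" for n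
    using that
  proof (induction n rule: nat_induct_non_zero)
    case 1
    then show ?case using assms by auto
  next
    case (Suc n)
    then obtain G where G: "G \<subseteq> cover_pow T A n" "UNIV \<subseteq> \<Union>G" "finite G"
      by blast
    have B: "B \<subseteq> cover_pow T A 1"
      using assms(1) by simp
    obtain G' where "G' \<subseteq> cover_pow T A (n + 1)" "UNIV \<subseteq> \<Union>G'" "finite G'"
      by (rule cover_pow_add_subcover[OF Suc.hyps zero_less_one G B assms(2,3)])
    then show ?case
      by auto
  qed
  then obtain G where "G \<subseteq> cover_pow T A n" "UNIV \<subseteq> \<Union>G" "finite G"
    using False by blast
  then have "N_cov (cover_pow T A n) \<le> card G"
    by (rule N_cov_le_card)
  then show ?thesis
    by auto
qed (simp add: N_cov_singleton_UNIV)

lemma N_cov_cover_pow_add_le: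
  assumes "N_cov (cover_pow T A m) \<noteq> \<infinity>" "N_cov (cover_pow T A n) \<noteq> \<infinity>"
  shows "N_cov (cover_pow T A (m + n)) \<le> N_cov (cover_pow T A m) * N_cov (cover_pow T A n)"
proof (cases "m = 0 \<or> n = 0")
  case True
  then show ?thesis by (auto simp: N_cov_singleton_UNIV)
next
  case False
  obtain B where B: "B \<subseteq> cover_pow T A m" "UNIV \<subseteq> \<Union>B" "finite B"
    "N_cov (cover_pow T A m) = card B"
    using N_K_attained assms(1) unfolding N_cov_def by metis
  obtain C where C: "C \<subseteq> cover_pow T A n" "UNIV \<subseteq> \<Union>C" "finite C"
    "N_cov (cover_pow T A n) = card C"
    using N_K_attained assms(2) unfolding N_cov_def by metis
  obtain G where "G \<subseteq> cover_pow T A (m + n)" "UNIV \<subseteq> \<Union>G" "finite G"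
    "card G \<le> card B * card C"
    using False cover_pow_add_subcover[OF _ _ B(1-3) C(1-3)] by blast
  then have "N_cov (cover_pow T A (m + n)) \<le> card G"
    by (intro N_cov_le_card)
  also have "\<dots> \<le> card B * card C"
    using \<open>card G \<le> card B * card C\<close> by (simp flip: of_nat_mult)
  finally show ?thesis
    using B(4) C(4) by simp
qed

subsection \<open>Fekete's lemma and growth rates\<close>

lemma subadditive_mult_add_le:
  fixes u :: "nat \<Rightarrow> real"
  assumes "\<And>m n. u (m + n) \<le> u m + u n"
  shows "u (q * m + r) \<le> real q * u m + u r"
proof (induction q)
  case (Suc q)
  have "u (Suc q * m + r) \<le> u m + u (q * m + r)"
    using assms[of m "q * m + r"] by (simp add: add.assoc)
  with Suc show ?case
    by (simp add: algebra_simps)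
qed simp

lemma fekete_subadditive:
  fixes u :: "nat \<Rightarrow> real"
  assumes sub: "\<And>m n. u (m + n) \<le> u m + u n" and nonneg: "\<And>n. 0 \<le> u n"
  shows "(\<lambda>n. u n / real n) \<longlonglongrightarrow> (INF n\<in>{1..}. u n / real n)"
proof (rule LIMSEQ_I)
  define L where "L = (INF n\<in>{1..}. u n / real n)"
  have bdd: "bdd_below ((\<lambda>n. u n / real n) ` {1..})"
    using nonneg by (intro bdd_belowI[of _ 0]) auto
  fix \<epsilon> :: real assume "0 < \<epsilon>"
  then have "\<exists>m\<in>{1..}. u m / real m < L + \<epsilon> / 2"
    using cInf_less_iff[OF _ bdd, of "L + \<epsilon> / 2"] unfolding L_def by auto
  then obtain m where m: "1 \<le> m" "u m / real m < L + \<epsilon> / 2"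
    by auto
  define M where "M = Max (u ` {..<m})"
  have M: "u r \<le> M" if "r < m" for r
    unfolding M_def using that by (intro Max_ge) auto
  obtain N :: nat where N: "2 * M / \<epsilon> < real N"
    using reals_Archimedean2 by blast
  show "\<exists>no. \<forall>n\<ge>no. norm (u n / real n - L) < \<epsilon>"
  proof (intro exI allI impI)
    fix n assume n: "max m (Suc N) \<le> n"
    then have n_pos: "0 < real n"
      by simp
    define q r where "q = n div m" and "r = n mod m"
    have "u n \<le> real q * u m + M"
      using subadditive_mult_add_le[OF sub, of q m r] M[of r] m(1)
      by (simp add: q_def r_def)
    then have "u n / real n \<le> real q * u m / real n + M / real n"
      using n_pos by (metis add_divide_distrib divide_right_mono less_eq_real_def)
    moreover have "real q * u m / real n \<le> u m / real m"
    proof -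
      have "real q * real m \<le> real n"
        by (metis div_times_less_eq_dividend of_nat_le_iff of_nat_mult q_def)
      from mult_right_mono[OF this nonneg[of m]] show ?thesis
        using n_pos m(1) by (simp add: field_simps)
    qed
    moreover have "M / real n < \<epsilon> / 2"
    proof -
      have "real N \<le> real n"
        using n by simp
      with N have "2 * M / \<epsilon> < real n"
        by linarith
      with \<open>0 < \<epsilon>\<close> have "2 * M < real n * \<epsilon>"
        by (simp add: pos_divide_less_eq)
      with n_pos show ?thesis
        by (simp add: field_simps)
    qed
    ultimately have "u n / real n < L + \<epsilon>"
      using m(2) by linarith
    moreover have "L \<le> u n / real n"
      unfolding L_def using n by (intro cInf_lower bdd) auto
    ultimately show "norm (u n / real n - L) < \<epsilon>"
      by (simp add: L_def)
  qed
qed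

lemma elog_mono: "x \<le> y \<Longrightarrow> elog x \<le> elog y"
  by (cases x; cases y) (auto simp: elog_def)

lemma elog_ereal: "0 < x \<Longrightarrow> elog (ereal x) = ereal (ln x)"
  by (simp add: elog_def)

lemma elog_div_le_of_le_one_plus_mult:
  assumes "0 < n" "1 \<le> a" "a \<noteq> \<infinity>" "1 \<le> b" "a \<le> 1 + ereal (real n) * b"
  shows "elog a / ereal (real n) \<le> ereal ((ln 2 + ln (real n)) / real n) + elog b / ereal (real n)"
proof (cases b)
  case (real b')
  obtain a' where a': "a = ereal a'"
    using assms(2,3) by (cases a) auto
  have "a' \<le> 1 + real n * b'"
    using assms(5) a' real by simp
  also have "\<dots> \<le> 2 * real n * b'"
    using assms(1,4) real mult_mono[of 1 "real n" 1 b'] by (simp add: mult.commute)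
  finally have "ln a' \<le> ln (2 * real n * b')"
    using assms(2) a' by (intro ln_mono) auto
  also have "\<dots> = ln 2 + ln (real n) + ln b'"
    using assms(1,4) real by (simp add: ln_mult)
  finally have "ln a' \<le> ln 2 + ln (real n) + ln b'" .
  then have "ln a' / real n \<le> (ln 2 + ln (real n) + ln b') / real n"
    by (simp add: divide_right_mono)
  also have "\<dots> = (ln 2 + ln (real n)) / real n + ln b' / real n"
    by (simp add: add_divide_distrib)
  finally have "ln a' / real n \<le> (ln 2 + ln (real n)) / real n + ln b' / real n" .
  then show ?thesis
    using assms(1,2,4) a' real by (simp add: elog_ereal)
qed (use assms(1,4) in \<open>auto simp: elog_def\<close>)

lemma cover_pow_growth_convergent:
  assumes "B \<subseteq> A" "UNIV \<subseteq> \<Union>B" "finite B"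
  shows "convergent (\<lambda>n. elog (N_cov (cover_pow T A n)) / ereal (real n))"
proof -
  define a where "a n = real_of_ereal (N_cov (cover_pow T A n))" for n
  have N_eq: "N_cov (cover_pow T A n) = ereal (a n)" and a_ge_1: "1 \<le> a n" for n
    using N_cov_cover_pow_finite[OF assms, of T n] one_le_N_K[of UNIV "cover_pow T A n"]
    by (cases "N_cov (cover_pow T A n)"; simp add: a_def N_cov_def)+
  have "ln (a (m + n)) \<le> ln (a m) + ln (a n)" for m n
  proof -
    have "a (m + n) \<le> a m * a n"
      using N_cov_cover_pow_add_le[of T A m n] by (simp add: N_eq)
    then have "ln (a (m + n)) \<le> ln (a m * a n)"
      using a_ge_1[of "m + n"] by (intro ln_mono) auto
    also have "\<dots> = ln (a m) + ln (a n)"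
      using a_ge_1[of m] a_ge_1[of n] by (simp add: ln_mult)
    finally show ?thesis .
  qed
  then have "(\<lambda>n. ln (a n) / real n) \<longlonglongrightarrow> (INF n\<in>{1..}. ln (a n) / real n)"
    using a_ge_1 by (intro fekete_subadditive) auto
  then have "(\<lambda>n. ereal (ln (a n) / real n)) \<longlonglongrightarrow> ereal (INF n\<in>{1..}. ln (a n) / real n)"
    by (rule tendsto_ereal)
  moreover have "\<forall>\<^sub>F n in sequentially.
      ereal (ln (a n) / real n) = elog (N_cov (cover_pow T A n)) / ereal (real n)"
    using a_ge_1 by (intro eventually_sequentiallyI[of 1])
      (simp add: N_eq elog_ereal less_le_trans[OF zero_less_one])
  ultimately have "(\<lambda>n. elog (N_cov (cover_pow T A n)) / ereal (real n))
      \<longlonglongrightarrow> ereal (INF n\<in>{1..}. ln (a n) / real n)"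
    by (rule Lim_transform_eventually)
  then show ?thesis
    unfolding convergent_def ..
qed

subsection \<open>Admissible covers and Bowen balls\<close>

lemma admissible_cover_finite_subcover:
  assumes "admissible_cover A"
  obtains B where "B \<subseteq> A" "UNIV \<subseteq> \<Union>B" "finite B"
proof -
  obtain U where U: "U \<in> A" "compact (- U)" and A: "\<forall>V\<in>A. open V" "\<Union>A = UNIV"
    using assms by (auto simp: admissible_cover_def)
  then obtain B where "B \<subseteq> A" "finite B" "- U \<subseteq> \<Union>B"
    by (metis compactE top_greatest)
  with U(1) show thesis
    by (intro that[of "insert U B"]) auto
qed

lemma admissible_cover_lebesgue_number:
  assumes "Metric_space UNIV d" "Metric_space.mtopology UNIV d = euclidean" "admissible_cover A"
  obtains \<delta> where "0 < \<delta>" "\<forall>x. \<exists>V\<in>A. {y. d x y < \<delta>} \<subseteq> V"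
proof -
  interpret Metric_space UNIV d
    by (rule assms(1))
  obtain U where U: "U \<in> A" "compact (- U)" and A: "\<forall>V\<in>A. open V" "\<Union>A = UNIV"
    using assms(3) by (auto simp: admissible_cover_def)
  obtain \<epsilon> where "0 < \<epsilon>" and \<epsilon>: "\<forall>w\<in>- U. \<exists>V\<in>A. mball w \<epsilon> \<subseteq> V"
    using lebesgue_number[of "- U" A] U(2) A assms(2) by auto
  have "\<exists>V\<in>A. {y. d x y < \<epsilon> / 2} \<subseteq> V" for x
  proof (cases "\<exists>w\<in>- U. d x w < \<epsilon> / 2")
    case True
    then obtain w V where "w \<in> - U" "d x w < \<epsilon> / 2" "V \<in> A" "mball w \<epsilon> \<subseteq> V"
      using \<epsilon> by blast
    moreover have "{y. d x y < \<epsilon> / 2} \<subseteq> mball w \<epsilon>"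
    proof
      fix y assume "y \<in> {y. d x y < \<epsilon> / 2}"
      then have "d w y < \<epsilon>"
        using \<open>d x w < \<epsilon> / 2\<close> triangle[of w x y] commute[of w x] by simp
      then show "y \<in> mball w \<epsilon>"
        by simp
    qed
    ultimately show ?thesis
      by blast
  next
    case False
    then have "{y. d x y < \<epsilon> / 2} \<subseteq> U"
      by auto
    with U(1) show ?thesis
      by blast
  qed
  with \<open>0 < \<epsilon>\<close> show thesis
    by (intro that[of "\<epsilon> / 2"]) auto
qed

lemma bowen_dist_less_iff:
  "0 < n \<Longrightarrow> bowen_dist d T n x y < e \<longleftrightarrow> (\<forall>i<n. d ((T ^^ i) x) ((T ^^ i) y) < e)"
  unfolding bowen_dist_def by (subst Max_less_iff) auto

lemma N_K_bowen_balls_mono: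
  assumes "0 < m" "m \<le> n"
  shows "N_K K (bowen_balls d T m e) \<le> N_K K (bowen_balls d T n e)"
proof (rule N_K_le_of_refines, rule ballI)
  fix b assume "b \<in> bowen_balls d T n e"
  then obtain x where "b = {y. bowen_dist d T n x y < e}"
    by (auto simp: bowen_balls_def)
  moreover have "{y. bowen_dist d T n x y < e} \<subseteq> {y. bowen_dist d T m x y < e}"
    using assms by (auto simp: bowen_dist_less_iff)
  ultimately show "\<exists>b'\<in>bowen_balls d T m e. b \<subseteq> b'"
    by (auto simp: bowen_balls_def)
qed

lemma bowen_balls_subfamily_centres:
  assumes "B \<subseteq> bowen_balls d T n e" "finite B"
  obtains Z where "finite Z" "card Z = card B" "\<Union>B = (\<Union>z\<in>Z. {y. bowen_dist d T n z y < e})"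
proof -
  have "B \<subseteq> (\<lambda>z. {y. bowen_dist d T n z y < e}) ` UNIV"
    using assms(1) by (auto simp: bowen_balls_def)
  then obtain Z where Z: "inj_on (\<lambda>z. {y. bowen_dist d T n z y < e}) Z"
    "B = (\<lambda>z. {y. bowen_dist d T n z y < e}) ` Z"
    by (auto simp: subset_image_inj)
  with assms(2) show thesis
    by (intro that[of Z]) (auto simp: card_image dest: finite_imageD)
qed

definition first_entry_cylinders ::
    "('a \<Rightarrow> 'a) \<Rightarrow> nat \<Rightarrow> 'a set \<Rightarrow> ('a \<Rightarrow> 'a set) \<Rightarrow> (nat \<Rightarrow> 'a set) \<Rightarrow> 'a set set" where
  "first_entry_cylinders T n U W Z = insert (cylinder T n (\<lambda>_. U))
     (\<Union>j<n. (\<lambda>z. cylinder T n (\<lambda>i. if i < j then U else W ((T ^^ (i - j)) z))) ` Z (n - j))"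

lemma first_entry_cylinders_subset_cover_pow:
  assumes "0 < n" "U \<in> A" "\<And>z. W z \<in> A"
  shows "first_entry_cylinders T n U W Z - {{}} \<subseteq> cover_pow T A n"
  using assms by (auto simp: first_entry_cylinders_def intro!: cover_pow_memI)

lemma finite_first_entry_cylinders:
  assumes "\<And>m. 0 < m \<Longrightarrow> m \<le> n \<Longrightarrow> finite (Z m)"
  shows "finite (first_entry_cylinders T n U W Z)"
  using assms by (simp add: first_entry_cylinders_def)

lemma card_first_entry_cylinders_le:
  assumes "\<And>m. 0 < m \<Longrightarrow> m \<le> n \<Longrightarrow> finite (Z m)"
  shows "card (first_entry_cylinders T n U W Z) \<le> 1 + (\<Sum>j<n. card (Z (n - j)))"
proof -
  define S where "S j z = cylinder T n (\<lambda>i. if i < j then U else W ((T ^^ (i - j)) z))" for j z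
  have finite_Z: "finite (Z (n - j))" if "j < n" for j
    using assms that by simp
  have "card (first_entry_cylinders T n U W Z) \<le> Suc (card (\<Union>j<n. S j ` Z (n - j)))"
    unfolding first_entry_cylinders_def S_def[abs_def] using finite_Z by (simp add: card_insert_if)
  also have "card (\<Union>j<n. S j ` Z (n - j)) \<le> (\<Sum>j<n. card (S j ` Z (n - j)))"
    by (rule card_UN_le) simp
  also have "\<dots> \<le> (\<Sum>j<n. card (Z (n - j)))"
    by (intro sum_mono card_image_le finite_Z) simp
  finally show ?thesis
    by simp
qed

lemma first_entry_cylinders_cover:
  assumes W: "\<And>z. {y. d z y < \<delta>} \<subseteq> W z" and "- K \<subseteq> U"
    and Z: "\<And>m. 0 < m \<Longrightarrow> m \<le> n \<Longrightarrow> K \<subseteq> (\<Union>z\<in>Z m. {y. bowen_dist d T m z y < \<delta>})"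
  shows "UNIV \<subseteq> \<Union>(first_entry_cylinders T n U W Z)"
proof
  fix x
  show "x \<in> \<Union>(first_entry_cylinders T n U W Z)"
  proof (cases "\<exists>i<n. (T ^^ i) x \<in> K")
    case False
    then have "x \<in> cylinder T n (\<lambda>_. U)"
      using \<open>- K \<subseteq> U\<close> by (auto simp: mem_cylinder_iff)
    then show ?thesis
      by (auto simp: first_entry_cylinders_def)
  next
    case True
    define j where "j = (LEAST i. i < n \<and> (T ^^ i) x \<in> K)"
    have j: "j < n" "(T ^^ j) x \<in> K"
      using LeastI_ex[OF True] by (simp_all add: j_def)
    have before: "(T ^^ i) x \<in> U" if "i < j" for i
      using not_less_Least[OF that[unfolded j_def]] j(1) that \<open>- K \<subseteq> U\<close> by auto
    have "0 < n - j" "n - j \<le> n"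
      using j(1) by auto
    with Z j(2) obtain z where z: "z \<in> Z (n - j)" "bowen_dist d T (n - j) z ((T ^^ j) x) < \<delta>"
      by blast
    have "x \<in> cylinder T n (\<lambda>i. if i < j then U else W ((T ^^ (i - j)) z))"
      unfolding mem_cylinder_iff
    proof (intro allI impI)
      fix i assume "i < n"
      show "(T ^^ i) x \<in> (if i < j then U else W ((T ^^ (i - j)) z))"
      proof (cases "i < j")
        case False
        have "(T ^^ i) x = (T ^^ (i - j)) ((T ^^ j) x)"
          using False by (simp add: funpow_add[symmetric, THEN fun_cong, simplified])
        moreover have "d ((T ^^ (i - j)) z) ((T ^^ (i - j)) ((T ^^ j) x)) < \<delta>"
          using z(2) \<open>i < n\<close> False j(1) by (simp add: bowen_dist_less_iff)
        ultimately show ?thesis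
          using False W by auto
      qed (simp add: before)
    qed
    moreover have "cylinder T n (\<lambda>i. if i < j then U else W ((T ^^ (i - j)) z))
        \<in> first_entry_cylinders T n U W Z"
      using j(1) z(1) unfolding first_entry_cylinders_def by blast
    ultimately show ?thesis
      by blast
  qed
qed

lemma bowen_centres_of_N_K_le:
  assumes "0 < m" "m \<le> n" "N_K K (bowen_balls d T n \<delta>) = ereal r"
  obtains Z where "finite Z" "K \<subseteq> (\<Union>z\<in>Z. {y. bowen_dist d T m z y < \<delta>})" "real (card Z) \<le> r"
proof -
  have N_K_m: "N_K K (bowen_balls d T m \<delta>) \<le> ereal r"
    using N_K_bowen_balls_mono[OF assms(1,2), of K d T \<delta>] assms(3) by simp
  then have "N_K K (bowen_balls d T m \<delta>) \<noteq> \<infinity>"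
    by auto
  then obtain B where B: "B \<subseteq> bowen_balls d T m \<delta>" "K \<subseteq> \<Union>B" "finite B"
    "N_K K (bowen_balls d T m \<delta>) = card B"
    by (rule N_K_attained)
  obtain Z where "finite Z" "card Z = card B" "\<Union>B = (\<Union>z\<in>Z. {y. bowen_dist d T m z y < \<delta>})"
    using bowen_balls_subfamily_centres[OF B(1,3)] by blast
  with B(2,4) N_K_m that show thesis
    by auto
qed

lemma N_cov_cover_pow_le_N_K_bowen:
  assumes "0 < n" and lebesgue: "\<forall>x. \<exists>V\<in>A. {y. d x y < \<delta>} \<subseteq> V" and U: "U \<in> A" "- K \<subseteq> U"
  shows "N_cov (cover_pow T A n) \<le> 1 + ereal (real n) * N_K K (bowen_balls d T n \<delta>)"
proof (cases "N_K K (bowen_balls d T n \<delta>)")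
  case (real r)
  have "\<forall>z. \<exists>V. V \<in> A \<and> {y. d z y < \<delta>} \<subseteq> V"
    using lebesgue by blast
  then obtain W where W: "\<forall>z. W z \<in> A \<and> {y. d z y < \<delta>} \<subseteq> W z"
    by (rule choice[THEN exE])
  have "\<exists>Z. finite Z \<and> K \<subseteq> (\<Union>z\<in>Z. {y. bowen_dist d T m z y < \<delta>}) \<and> real (card Z) \<le> r"
    if m: "0 < m" "m \<le> n" for m
  proof -
    obtain Z where "finite Z" "K \<subseteq> (\<Union>z\<in>Z. {y. bowen_dist d T m z y < \<delta>})" "real (card Z) \<le> r"
      by (rule bowen_centres_of_N_K_le[OF m real])
    then show ?thesis
      by blast
  qed
  then have "\<forall>m. \<exists>Z. 0 < m \<longrightarrow> m \<le> n \<longrightarrow>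
      finite Z \<and> K \<subseteq> (\<Union>z\<in>Z. {y. bowen_dist d T m z y < \<delta>}) \<and> real (card Z) \<le> r"
    by blast
  then obtain Z where Z: "\<forall>m. 0 < m \<longrightarrow> m \<le> n \<longrightarrow> finite (Z m) \<and>
      K \<subseteq> (\<Union>z\<in>Z m. {y. bowen_dist d T m z y < \<delta>}) \<and> real (card (Z m)) \<le> r"
    by (rule choice[THEN exE])
  then have finite_Z: "finite (Z m)" if "0 < m" "m \<le> n" for m
    using that by simp
  let ?G = "first_entry_cylinders T n U W Z"
  have "?G - {{}} \<subseteq> cover_pow T A n"
    using W by (intro first_entry_cylinders_subset_cover_pow assms(1) U(1)) blast
  moreover have "UNIV \<subseteq> \<Union>(?G - {{}})"
  proof -
    have W_ball: "\<And>z. {y. d z y < \<delta>} \<subseteq> W z"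
      using W by blast
    have Z_cover: "K \<subseteq> (\<Union>z\<in>Z m. {y. bowen_dist d T m z y < \<delta>})" if "0 < m" "m \<le> n" for m
      using Z that by simp
    show ?thesis
      using first_entry_cylinders_cover[OF W_ball U(2) Z_cover] by blast
  qed
  moreover have "finite (?G - {{}})"
    using finite_first_entry_cylinders[OF finite_Z] by simp
  ultimately have "N_cov (cover_pow T A n) \<le> card (?G - {{}})"
    by (rule N_cov_le_card)
  moreover have "real (card (?G - {{}})) \<le> 1 + real n * r"
  proof -
    have card_Z: "real (card (Z m)) \<le> r" if "0 < m" "m \<le> n" for m
      using Z that by simp
    have "card (?G - {{}}) \<le> 1 + (\<Sum>j<n. card (Z (n - j)))"
      by (rule order_trans[OF card_Diff1_le card_first_entry_cylinders_le[OF finite_Z]])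
    from of_nat_mono[OF this, where 'a = real]
    have "real (card (?G - {{}})) \<le> 1 + (\<Sum>j<n. real (card (Z (n - j))))"
      by simp
    also have "\<dots> \<le> 1 + (\<Sum>j<n. r)"
      using card_Z by (intro add_left_mono sum_mono) auto
    finally show ?thesis
      by simp
  qed
  ultimately show ?thesis
    using real by (simp add: add.commute order_trans)
qed (use assms(1) N_K_nonneg[of K] in auto)

subsection \<open>Comparison of the entropies\<close>

lemma cover_pow_growth_le_bowen_entropy:
  assumes "Metric_space UNIV d" "Metric_space.mtopology UNIV d = euclidean" "admissible_cover A"
  shows "lim (\<lambda>n. elog (N_cov (cover_pow T A n)) / ereal (real n)) \<le> bowen_entropy d T"
proof -
  obtain U where U: "U \<in> A" "compact (- U)"
    using assms(3) by (auto simp: admissible_cover_def)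
  \<comment> \<open>Any nonempty compact \<open>K \<supseteq> - U\<close> will do; nonemptiness keeps \<open>N\<^sub>K \<ge> 1\<close>.\<close>
  define K where "K = insert undefined (- U)"
  have K: "compact K" "K \<noteq> {}" "- K \<subseteq> U"
    using U(2) by (auto simp: K_def)
  obtain \<delta> where \<delta>: "0 < \<delta>" "\<forall>x. \<exists>V\<in>A. {y. d x y < \<delta>} \<subseteq> V"
    using admissible_cover_lebesgue_number[OF assms] by blast
  obtain B where B: "B \<subseteq> A" "UNIV \<subseteq> \<Union>B" "finite B"
    using admissible_cover_finite_subcover[OF assms(3)] by blast
  define f where "f n = elog (N_cov (cover_pow T A n)) / ereal (real n)" for n
  define g where "g n = elog (N_K K (bowen_balls d T n \<delta>)) / ereal (real n)" for n
  have "convergent f"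
    unfolding f_def by (rule cover_pow_growth_convergent[OF B])
  then have "lim f = limsup f"
    by (simp add: convergent_limsup_cl)
  also have "\<dots> \<le> limsup (\<lambda>n. ereal ((ln 2 + ln (real n)) / real n) + g n)"
  proof (intro Limsup_mono eventually_sequentiallyI[of 1])
    fix n :: nat assume "1 \<le> n"
    then show "f n \<le> ereal ((ln 2 + ln (real n)) / real n) + g n"
      unfolding f_def g_def
      using N_cov_cover_pow_finite[OF B] one_le_N_K[of UNIV] one_le_N_K[OF K(2)]
        N_cov_cover_pow_le_N_K_bowen[OF _ \<delta>(2) U(1) K(3)]
      by (intro elog_div_le_of_le_one_plus_mult) (auto simp: N_cov_def)
  qed
  also have "\<dots> = limsup g"
  proof -
    have "(\<lambda>n. ereal ((ln 2 + ln (real n)) / real n)) \<longlonglongrightarrow> ereal 0"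
    proof (intro tendsto_ereal)
      have "(\<lambda>n. ln 2 / real n + ln (real n) / real n) \<longlonglongrightarrow> 0 + 0"
        by (intro tendsto_add lim_const_over_n lim_ln_over_n)
      then show "(\<lambda>n. (ln 2 + ln (real n)) / real n) \<longlonglongrightarrow> 0"
        by (simp add: add_divide_distrib)
    qed
    from ereal_limsup_lim_add[OF this, of g] show ?thesis
      by (simp flip: zero_ereal_def)
  qed
  also have "\<dots> \<le> bowen_entropy d T"
    unfolding bowen_entropy_def g_def using \<delta>(1) K(1)
    by (intro SUP_upper2[of "(\<delta>, K)"]) auto
  finally show ?thesis
    unfolding f_def .
qed

lemma bowen_entropy_le_metric_entropy: "bowen_entropy d T \<le> metric_entropy d T"
  unfolding bowen_entropy_def
proof (intro SUP_least, clarify)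
  fix e :: real and K :: "'a set" assume "0 < e"
  have "limsup (\<lambda>n. elog (N_K K (bowen_balls d T n e)) / ereal (real n))
      \<le> limsup (\<lambda>n. elog (N_cov (bowen_balls d T n e)) / ereal (real n))"
    unfolding N_cov_def
    by (intro Limsup_mono eventually_sequentiallyI[of 1] ereal_divide_right_mono elog_mono N_K_mono)
      auto
  also have "\<dots> \<le> metric_entropy d T"
    unfolding metric_entropy_def using \<open>0 < e\<close> by (intro SUP_upper) auto
  finally show "limsup (\<lambda>n. elog (N_K K (bowen_balls d T n e)) / ereal (real n))
      \<le> metric_entropy d T" .
qed

theorem proposition2p30:
  fixes T :: "'a::topological_space \<Rightarrow> 'a" and d :: "'a \<Rightarrow> 'a \<Rightarrow> real"
  assumes "Metric_space UNIV d"
    and "Metric_space.mtopology UNIV d = euclidean"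
    and "continuous_on UNIV T"
  shows "top_entropy T \<le> bowen_entropy d T \<and> bowen_entropy d T \<le> metric_entropy d T"
proof
  show "top_entropy T \<le> bowen_entropy d T"
    unfolding top_entropy_def using cover_pow_growth_le_bowen_entropy[OF assms(1,2)]
    by (intro SUP_least) blast
  show "bowen_entropy d T \<le> metric_entropy d T"
    by (rule bowen_entropy_le_metric_entropy)
qed

end
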